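(* Let $(V,\|\cdot\|_V)$ be a separable real Banach space, let $(\Omega,\mathcal F,\mathbb P)$ be a probability space, let $A\colon D(A)\subseteq V\to V$ be the generator of a strongly continuous semigroup $(e^{tA})_{t\ge0}$, let $O\colon[0,T]\times\Omega\to V$ be a stochastic process, and let $T,h\in(0,\infty)$, $Y\colon[0,T]\times\Omega\to V$ a mapping, and $F\colon V^2\to V$ a $\mathcal B(V^2)/\mathcal B(V)$-measurable function satisfy for all $t\in[0,T]$ (and all $\omega\in\Omega$) that $Y_t=\int_0^te^{(t-s)A}F(Y_{\lfloor s\rfloor_h},O_{\lfloor s\rfloor_h})\,ds+O_t$. Then $Y\colon[0,T]\times\Omega\to V$ is a stochastic process and $Y-O\colon[0,T]\times\Omega\to V$ is a stochastic process with right-continuous sample paths.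
   Context: For $h>0$, $\lfloor t\rfloor_h=\max((-\infty,t]\cap\{0,h,-h,2h,-2h,\dots\})$. A stochastic process is a mapping $Z\colon[0,T]\times\Omega\to V$ such that each $Z_t$ is $\mathcal F/\mathcal B(V)$-measurable. *)

theory Defs
  imports "HOL-Analysis.Analysis" "HOL-Probability.Probability"
begin

definition floorh :: "real \<Rightarrow> real \<Rightarrow> real" where
  "floorh h t = (GREATEST x. x \<le> t \<and> (\<exists>k::int. x = of_int k * h))"

definition C0_semigroup :: "(real \<Rightarrow> 'v::real_normed_vector \<Rightarrow> 'v) \<Rightarrow> bool" where
  "C0_semigroup S \<longleftrightarrow>
     (\<forall>t\<ge>0. bounded_linear (S t)) \<and>
     S 0 = id \<and>
     (\<forall>s\<ge>0. \<forall>t\<ge>0. S (s + t) = S s \<circ> S t) \<and>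
     (\<forall>x. ((\<lambda>t. S t x) \<longlongrightarrow> x) (at_right 0))"

definition stoch_process ::
  "'a measure \<Rightarrow> real \<Rightarrow> (real \<Rightarrow> 'a \<Rightarrow> 'v::topological_space) \<Rightarrow> bool" where
  "stoch_process M T Z \<longleftrightarrow> (\<forall>t\<in>{0..T}. Z t \<in> borel_measurable M)"

end

theory Submission
  imports Defs
begin

text \<open>
  Measurability is proved along the grid h\<int>: up to the null set {t}, the integral defining Y t
  only involves Y and O at grid points strictly before t, so by induction over the grid cells
  Y t is O t plus a parametric integral of a jointly measurable integrand. Joint measurability
  of (t, x) \<mapsto> e^{tA} x, which is only right continuous in t, comes from approximating t from
  above by dyadic times.

  Right continuity of Y - O at t follows from the semigroup identity
  \<Phi> r = e^{(r-t)A} (\<Phi> t) + \<integral>_t^r e^{(r-s)A} G s ds for the mild part \<Phi>: the last term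
  is bounded by a constant times r - t, because the piecewise constant G takes finitely many
  values on a bounded interval and every orbit of a C0 semigroup is bounded on compact time
  intervals.
\<close>

lemma floorh_eq:
  assumes "h > 0"
  shows "floorh h s = of_int \<lfloor>s / h\<rfloor> * h"
  unfolding floorh_def
proof (rule Greatest_equality)
  show "of_int \<lfloor>s / h\<rfloor> * h \<le> s \<and> (\<exists>k::int. of_int \<lfloor>s / h\<rfloor> * h = of_int k * h)"
    using assms by (auto simp: pos_le_divide_eq[symmetric])
next
  fix y assume "y \<le> s \<and> (\<exists>k::int. y = of_int k * h)"
  then obtain k :: int where y: "y = of_int k * h" "y \<le> s" by auto
  then have "k \<le> \<lfloor>s / h\<rfloor>"
    using assms by (simp add: le_floor_iff pos_le_divide_eq)
  then show "y \<le> of_int \<lfloor>s / h\<rfloor> * h"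
    using y assms by simp
qed

lemma floorh_le: "h > 0 \<Longrightarrow> floorh h s \<le> s"
  by (simp add: floorh_eq pos_le_divide_eq[symmetric])

lemma floorh_nonneg: "h > 0 \<Longrightarrow> 0 \<le> s \<Longrightarrow> 0 \<le> floorh h s"
  by (simp add: floorh_eq)

lemma floorh_of_int_mult: "h > 0 \<Longrightarrow> floorh h (of_int k * h) = of_int k * h"
  by (simp add: floorh_eq)

lemma floorh_le_of_less:
  assumes "h > 0" and "s < (real n + 1) * h"
  shows "floorh h s \<le> real n * h"
proof -
  have "s / h < real n + 1"
    using assms by (simp add: pos_divide_less_eq)
  then have "\<lfloor>s / h\<rfloor> \<le> int n"
    by linarith
  then show ?thesis
    using assms(1) by (simp add: floorh_eq)
qed

lemma finite_image_floorh:
  assumes "h > 0"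
  shows "finite (floorh h ` {a..b})"
proof (rule finite_subset)
  show "floorh h ` {a..b} \<subseteq> (\<lambda>k. of_int k * h) ` {\<lfloor>a / h\<rfloor>..\<lfloor>b / h\<rfloor>}"
  proof
    fix x assume "x \<in> floorh h ` {a..b}"
    then obtain s where s: "a \<le> s" "s \<le> b" "x = of_int \<lfloor>s / h\<rfloor> * h"
      using assms by (auto simp: floorh_eq)
    have "\<lfloor>s / h\<rfloor> \<in> {\<lfloor>a / h\<rfloor>..\<lfloor>b / h\<rfloor>}"
      using s assms by (auto intro!: floor_mono divide_right_mono)
    then show "x \<in> (\<lambda>k. of_int k * h) ` {\<lfloor>a / h\<rfloor>..\<lfloor>b / h\<rfloor>}"
      using s(3) by blast
  qed
qed simp

lemma measurable_compose_floorh: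
  assumes "h > 0" and "\<phi> \<in> borel_measurable N"
    and "\<And>k::int. f (of_int k * h) \<in> measurable N N'"
  shows "(\<lambda>x. f (floorh h (\<phi> x)) x) \<in> measurable N N'"
proof -
  have "(\<lambda>x. \<lfloor>\<phi> x / h\<rfloor>) \<in> measurable N (count_space UNIV)"
    using assms(2) by (intro measurable_compose[OF _ measurable_real_floor]) simp
  then have "(\<lambda>x. f (of_int \<lfloor>\<phi> x / h\<rfloor> * h) x) \<in> measurable N N'"
    by (rule measurable_compose_countable'[OF assms(3)]) simp_all
  then show ?thesis
    using assms(1) by (simp add: floorh_eq)
qed

lemma C0_semigroup_bounded_linear: "C0_semigroup S \<Longrightarrow> t \<ge> 0 \<Longrightarrow> bounded_linear (S t)"
  by (simp add: C0_semigroup_def)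

lemma C0_semigroup_zero: "C0_semigroup S \<Longrightarrow> S 0 x = x"
  by (simp add: C0_semigroup_def)

lemma C0_semigroup_add:
  "C0_semigroup S \<Longrightarrow> s \<ge> 0 \<Longrightarrow> t \<ge> 0 \<Longrightarrow> S (s + t) x = S s (S t x)"
  unfolding C0_semigroup_def by (metis comp_apply)

lemma C0_semigroup_tendsto_at_right:
  assumes S: "C0_semigroup S" and "t \<ge> 0"
  shows "((\<lambda>w. S w x) \<longlongrightarrow> S t x) (at_right t)"
proof -
  have "((\<lambda>v. S v x) \<longlongrightarrow> x) (at_right 0)"
    using S by (simp add: C0_semigroup_def)
  then have "((\<lambda>v. S t (S v x)) \<longlongrightarrow> S t x) (at_right 0)"
    by (rule bounded_linear.tendsto[OF C0_semigroup_bounded_linear[OF S \<open>t \<ge> 0\<close>]])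
  moreover have "\<forall>\<^sub>F v in at_right 0. S t (S v x) = S (v + t) x"
    using C0_semigroup_add[OF S \<open>t \<ge> 0\<close>, of _ x] unfolding eventually_at_right_field
    by (intro exI[of _ 1]) (simp add: add.commute)
  ultimately have "((\<lambda>v. S (v + t) x) \<longlongrightarrow> S t x) (at_right 0)"
    by (rule Lim_transform_eventually)
  then show ?thesis
    by (subst at_right_to_0) (simp add: filterlim_filtermap)
qed

lemma C0_semigroup_orbit_bounded:
  assumes S: "C0_semigroup S"
  shows "\<exists>B. \<forall>w\<in>{0..c}. norm (S w x) \<le> B"
proof -
  have "\<forall>\<^sub>F w in at_right 0. dist (S w x) x < 1"
    using tendstoD[OF C0_semigroup_tendsto_at_right[OF S order_refl, of x]]
    by (simp add: C0_semigroup_zero[OF S])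
  then obtain b where "b > 0" and b: "\<And>w. 0 < w \<Longrightarrow> w < b \<Longrightarrow> dist (S w x) x < 1"
    unfolding eventually_at_right_field by auto
  define d where "d = b / 2"
  have d: "0 < d" "d < b"
    using \<open>b > 0\<close> by (auto simp: d_def)
  have short: "norm (S w x) \<le> norm x + 1" if "w \<in> {0..d}" for w
  proof (cases "w = 0")
    case True
    then show ?thesis by (simp add: C0_semigroup_zero[OF S])
  next
    case False
    then have "dist (S w x) x < 1"
      using b[of w] that d by auto
    then show ?thesis
      using norm_triangle_sub[of "S w x" x] by (simp add: dist_norm)
  qed
  obtain K where K: "\<And>y. norm (S d y) \<le> norm y * K" "K > 0"
    using bounded_linear.pos_bounded[OF C0_semigroup_bounded_linear[OF S]] d(1) by (metis less_eq_real_def)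
  have "\<exists>B. \<forall>w\<in>{0..real n * d}. norm (S w x) \<le> B" for n
  proof (induction n)
    case 0
    then show ?case using short d by auto
  next
    case (Suc n)
    then obtain B where B: "\<forall>w\<in>{0..real n * d}. norm (S w x) \<le> B"
      by auto
    have "norm (S w x) \<le> max (norm x + 1) (K * B)" if w: "w \<in> {0..real (Suc n) * d}" for w
    proof (cases "w \<le> d")
      case True
      then show ?thesis using short w by (simp add: le_max_iff_disj)
    next
      case False
      then have "S w x = S d (S (w - d) x)"
        using C0_semigroup_add[OF S, of d "w - d"] d by simp
      then have "norm (S w x) \<le> norm (S (w - d) x) * K"
        using K by simp
      also have "\<dots> \<le> B * K"
        using B w False K by (intro mult_right_mono) (auto simp: algebra_simps)
      finally show ?thesis
        by (simp add: mult.commute)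
    qed
    then show ?case by blast
  qed
  moreover obtain n :: nat where "c / d \<le> n"
    using real_arch_simple by blast
  then have "c \<le> real n * d"
    using d by (simp add: divide_le_eq)
  ultimately show ?thesis
    by (meson atLeastAtMost_iff order_trans)
qed

lemma C0_semigroup_bounded_on_finite:
  assumes "C0_semigroup S" and "finite X"
  shows "\<exists>B. \<forall>x\<in>X. \<forall>w\<in>{0..c}. norm (S w x) \<le> B"
  using assms(2)
proof (induction X rule: finite_induct)
  case empty
  then show ?case by simp
next
  case (insert x X)
  then obtain B where "\<forall>y\<in>X. \<forall>w\<in>{0..c}. norm (S w y) \<le> B"
    by blast
  moreover obtain B' where "\<forall>w\<in>{0..c}. norm (S w x) \<le> B'"
    using C0_semigroup_orbit_bounded[OF assms(1)] by blast
  ultimately have "\<forall>y\<in>insert x X. \<forall>w\<in>{0..c}. norm (S w y) \<le> max B B'"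
    by (simp add: le_max_iff_disj)
  then show ?case by blast
qed

lemma LIMSEQ_dyadic_ceiling:
  "(\<lambda>n. of_int \<lceil>u * 2 ^ n\<rceil> / 2 ^ n) \<longlonglongrightarrow> (u::real)"
  and dyadic_ceiling_ge: "u \<le> of_int \<lceil>u * 2 ^ n\<rceil> / 2 ^ n"
proof -
  show ge: "u \<le> of_int \<lceil>u * 2 ^ n\<rceil> / 2 ^ n" for n
    by (simp add: le_divide_eq)
  have le: "of_int \<lceil>u * 2 ^ n\<rceil> / 2 ^ n \<le> u + 1 / 2 ^ n" for n :: nat
    using ceiling_correct[of "u * 2 ^ n"] by (simp add: divide_le_eq distrib_right)
  have "(\<lambda>n. u + 1 / 2 ^ n) \<longlonglongrightarrow> u + 0"
    by (intro tendsto_add tendsto_const LIMSEQ_divide_realpow_zero) auto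
  then have upper: "(\<lambda>n. u + 1 / 2 ^ n) \<longlonglongrightarrow> u"
    by simp
  show "(\<lambda>n. of_int \<lceil>u * 2 ^ n\<rceil> / 2 ^ n) \<longlonglongrightarrow> u"
    by (rule real_tendsto_sandwich[OF always_eventually always_eventually tendsto_const upper])
       (use ge le in auto)
qed
lemma C0_semigroup_borel_measurable:
  assumes S: "C0_semigroup S"
    and [measurable]: "g \<in> borel_measurable N" "v \<in> borel_measurable N"
  shows "(\<lambda>z. S (max 0 (g z)) (v z)) \<in> borel_measurable N"
proof (rule borel_measurable_LIMSEQ_metric)
  fix n :: nat
  have "continuous_on UNIV (S (max 0 (of_int k / 2 ^ n)))" for k :: int
    by (intro linear_continuous_on C0_semigroup_bounded_linear[OF S]) simp
  then have "(\<lambda>z. S (max 0 (of_int k / 2 ^ n)) (v z)) \<in> borel_measurable N" for k :: int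
    by (intro borel_measurable_continuous_on[where f="S _"]) simp_all
  moreover have "(\<lambda>z. \<lceil>max 0 (g z) * 2 ^ n\<rceil>) \<in> measurable N (count_space UNIV)"
    by (intro measurable_compose[OF _ measurable_real_ceiling]) simp
  ultimately show "(\<lambda>z. S (max 0 (of_int \<lceil>max 0 (g z) * 2 ^ n\<rceil> / 2 ^ n)) (v z)) \<in> borel_measurable N"
    by (rule measurable_compose_countable'[where f="\<lambda>k z. S (max 0 (of_int k / 2 ^ n)) (v z)"]) simp_all
next
  fix z
  let ?u = "max 0 (g z)"
  have "max 0 (of_int \<lceil>?u * 2 ^ n\<rceil> / 2 ^ n) = (of_int \<lceil>?u * 2 ^ n\<rceil> / 2 ^ n :: real)" for n :: nat
    using dyadic_ceiling_ge[of ?u n] by linarith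
  moreover have "(\<lambda>n. S (of_int \<lceil>?u * 2 ^ n\<rceil> / 2 ^ n) (v z)) \<longlonglongrightarrow> S ?u (v z)"
  proof (rule continuous_within_tendsto_compose'[OF _ _ LIMSEQ_dyadic_ceiling])
    show "continuous (at ?u within {?u..}) (\<lambda>w. S w (v z))"
      unfolding continuous_within at_within_Ici_at_right
      by (rule C0_semigroup_tendsto_at_right[OF S]) simp
  qed (simp add: dyadic_ceiling_ge)
  ultimately show "(\<lambda>n. S (max 0 (of_int \<lceil>?u * 2 ^ n\<rceil> / 2 ^ n)) (v z)) \<longlonglongrightarrow> S ?u (v z)"
    by simp
qed


lemma step_convolution_integrand_measurable:
  fixes S :: "real \<Rightarrow> 'v::{banach, second_countable_topology} \<Rightarrow> 'v"
  assumes S: "C0_semigroup S" and h: "h > 0"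
    and A: "A \<in> sets borel" "A \<subseteq> {0..r}"
  shows "(\<lambda>s. indicator A s *\<^sub>R S (r - s) (g (floorh h s))) \<in> borel_measurable lborel"
proof -
  have "(\<lambda>s. g (floorh h s)) \<in> borel_measurable lborel"
    using measurable_compose_floorh[OF h, of "\<lambda>s. s" lborel "\<lambda>x s. g x"] by simp
  then have "(\<lambda>s. S (max 0 (r - s)) (g (floorh h s))) \<in> borel_measurable lborel"
    by (rule C0_semigroup_borel_measurable[OF S, rotated]) simp
  then have "(\<lambda>s. indicator A s *\<^sub>R S (max 0 (r - s)) (g (floorh h s))) \<in> borel_measurable lborel"
    using A(1) by (intro borel_measurable_scaleR borel_measurable_indicator) simp_all
  moreover have "indicator A s *\<^sub>R S (max 0 (r - s)) (g (floorh h s))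
      = indicator A s *\<^sub>R S (r - s) (g (floorh h s))" for s
    using A(2) by (cases "s \<in> A") auto
  ultimately show ?thesis
    by simp
qed
lemma step_convolution_bounded:
  assumes S: "C0_semigroup S" and h: "h > 0"
  shows "\<exists>B. \<forall>w\<in>{0..c}. \<forall>s\<in>{0..c}. norm (S w (g (floorh h s))) \<le> B"
proof -
  have "finite (g ` floorh h ` {0..c})"
    using finite_image_floorh[OF h] by (rule finite_imageI)
  then obtain B where "\<forall>x\<in>g ` floorh h ` {0..c}. \<forall>w\<in>{0..c}. norm (S w x) \<le> B"
    using C0_semigroup_bounded_on_finite[OF S] by blast
  then show ?thesis
    by blast
qed

lemma step_convolution_integrable:
  fixes S :: "real \<Rightarrow> 'v::{banach, second_countable_topology} \<Rightarrow> 'v"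
  assumes S: "C0_semigroup S" and h: "h > 0"
    and A: "A \<in> sets borel" "A \<subseteq> {0..r}"
  shows "set_integrable lborel A (\<lambda>s. S (r - s) (g (floorh h s)))"
proof -
  obtain B where B: "\<forall>w\<in>{0..r}. \<forall>s\<in>{0..r}. norm (S w (g (floorh h s))) \<le> B"
    using step_convolution_bounded[OF S h] by blast
  have "emeasure lborel A \<le> emeasure lborel {0..r}"
    using A by (intro emeasure_mono) auto
  then have "emeasure lborel A < \<infinity>"
    by (simp add: emeasure_lborel_Icc_eq le_less_trans)
  moreover have "AE s in lborel. s \<in> A \<longrightarrow> norm (indicator A s *\<^sub>R S (r - s) (g (floorh h s))) \<le> B"
    using A(2) B by (intro AE_I2) auto
  ultimately show ?thesis
    unfolding set_integrable_def using A step_convolution_integrand_measurable[OF S h A]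
    by (intro integrableI_bounded_set[where A=A and B=B]) simp_all
qed

lemma step_convolution_split:
  fixes S :: "real \<Rightarrow> 'v::{banach, second_countable_topology} \<Rightarrow> 'v"
  assumes S: "C0_semigroup S" and h: "h > 0" and t: "0 \<le> t" "t \<le> r"
  shows "(LINT s:{0..r}|lborel. S (r - s) (g (floorh h s)))
       = S (r - t) (LINT s:{0..t}|lborel. S (t - s) (g (floorh h s)))
         + (LINT s:{t<..r}|lborel. S (r - s) (g (floorh h s)))"
proof -
  have "{0..r} = {0..t} \<union> {t<..r}"
    using t by auto
  moreover have "set_integrable lborel {0..t} (\<lambda>s. S (r - s) (g (floorh h s)))"
    and "set_integrable lborel {t<..r} (\<lambda>s. S (r - s) (g (floorh h s)))"
    using t by (auto intro: step_convolution_integrable[OF S h])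
  ultimately have "(LINT s:{0..r}|lborel. S (r - s) (g (floorh h s)))
      = (LINT s:{0..t}|lborel. S (r - s) (g (floorh h s)))
        + (LINT s:{t<..r}|lborel. S (r - s) (g (floorh h s)))"
    by (simp add: set_integral_Un ivl_disj_int_two(8))
  also have "(LINT s:{0..t}|lborel. S (r - s) (g (floorh h s)))
      = (LINT s:{0..t}|lborel. S (r - t) (S (t - s) (g (floorh h s))))"
  proof (rule set_lebesgue_integral_cong)
    show "\<forall>s. s \<in> {0..t} \<longrightarrow> S (r - s) (g (floorh h s)) = S (r - t) (S (t - s) (g (floorh h s)))"
    proof (intro allI impI)
      fix s assume "s \<in> {0..t}"
      then have "S ((r - t) + (t - s)) (g (floorh h s)) = S (r - t) (S (t - s) (g (floorh h s)))"
        using t by (intro C0_semigroup_add[OF S]) auto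
      then show "S (r - s) (g (floorh h s)) = S (r - t) (S (t - s) (g (floorh h s)))"
        by simp
    qed
  qed simp
  also have "\<dots> = S (r - t) (LINT s:{0..t}|lborel. S (t - s) (g (floorh h s)))"
  proof -
    have lin: "bounded_linear (S (r - t))"
      using t by (intro C0_semigroup_bounded_linear[OF S]) simp
    have "(\<lambda>s. indicator {0..t} s *\<^sub>R S (r - t) (S (t - s) (g (floorh h s))))
        = (\<lambda>s. S (r - t) (indicator {0..t} s *\<^sub>R S (t - s) (g (floorh h s))))"
      using linear_scale[OF bounded_linear.linear[OF lin]] by auto
    moreover have "integrable lborel (\<lambda>s. indicator {0..t} s *\<^sub>R S (t - s) (g (floorh h s)))"
      using step_convolution_integrable[OF S h, of "{0..t}" t g] by (simp add: set_integrable_def)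
    ultimately show ?thesis
      unfolding set_lebesgue_integral_def by (simp add: integral_bounded_linear[OF lin])
  qed
  finally show ?thesis .
qed


lemma step_convolution_continuous_right:
  fixes S :: "real \<Rightarrow> 'v::{banach, second_countable_topology} \<Rightarrow> 'v"
  assumes S: "C0_semigroup S" and h: "h > 0" and t: "0 \<le> t"
  shows "continuous (at t within {t..}) (\<lambda>r. LINT s:{0..r}|lborel. S (r - s) (g (floorh h s)))"
proof -
  define \<Phi> where "\<Phi> r = (LINT s:{0..r}|lborel. S (r - s) (g (floorh h s)))" for r
  define R where "R r = (LINT s:{t<..r}|lborel. S (r - s) (g (floorh h s)))" for r
  obtain B where B: "\<forall>w\<in>{0..t + 1}. \<forall>s\<in>{0..t + 1}. norm (S w (g (floorh h s))) \<le> B"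
    using step_convolution_bounded[OF S h] by blast
  have R_bound: "norm (R r) \<le> B * (r - t)" if r: "t < r" "r < t + 1" for r
  proof -
    have int: "set_integrable lborel {t<..r} (\<lambda>s. S (r - s) (g (floorh h s)))"
      using t by (intro step_convolution_integrable[OF S h]) auto
    have "norm (R r) \<le> (LINT s:{t<..r}|lborel. norm (S (r - s) (g (floorh h s))))"
      unfolding R_def by (rule set_integral_norm_bound[OF int])
    also have "\<dots> \<le> (LINT s:{t<..r}|lborel. B)"
    proof (rule set_integral_mono)
      show "set_integrable lborel {t<..r} (\<lambda>s. norm (S (r - s) (g (floorh h s))))"
        by (rule set_integrable_norm[OF int])
      show "set_integrable lborel {t<..r} (\<lambda>s. B)"
        using r by (simp add: set_integrable_def)
      show "norm (S (r - s) (g (floorh h s))) \<le> B" if "s \<in> {t<..r}" for s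
        using that t r B by auto
    qed
    also have "\<dots> = measure lborel {t<..r} *\<^sub>R B"
      using r by (intro set_integral_const) auto
    also have "\<dots> = B * (r - t)"
      using r by simp
    finally show ?thesis .
  qed
  have "((\<lambda>r. S (r - t) (\<Phi> t)) \<longlongrightarrow> S 0 (\<Phi> t)) (at_right t)"
    using C0_semigroup_tendsto_at_right[OF S order_refl, of "\<Phi> t"]
    by (subst at_right_to_0) (simp add: filterlim_filtermap)
  moreover have "(R \<longlongrightarrow> 0) (at_right t)"
  proof (rule Lim_null_comparison)
    show "\<forall>\<^sub>F r in at_right t. norm (R r) \<le> B * (r - t)"
      using R_bound by (intro eventually_at_rightI[of t "t + 1"]) auto
    have "((\<lambda>r. B * (r - t)) \<longlongrightarrow> B * (t - t)) (at_right t)"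
      by (intro tendsto_intros)
    then show "((\<lambda>r. B * (r - t)) \<longlongrightarrow> 0) (at_right t)"
      by simp
  qed
  ultimately have "((\<lambda>r. S (r - t) (\<Phi> t) + R r) \<longlongrightarrow> S 0 (\<Phi> t) + 0) (at_right t)"
    by (rule tendsto_add)
  then have "((\<lambda>r. S (r - t) (\<Phi> t) + R r) \<longlongrightarrow> \<Phi> t) (at_right t)"
    by (simp add: C0_semigroup_zero[OF S])
  moreover have "\<forall>\<^sub>F r in at_right t. S (r - t) (\<Phi> t) + R r = \<Phi> r"
    using eventually_at_right_less[of t]
  proof eventually_elim
    case (elim r)
    then show ?case
      unfolding \<Phi>_def R_def using step_convolution_split[OF S h t, of r g] by simp
  qed
  ultimately have "(\<Phi> \<longlongrightarrow> \<Phi> t) (at_right t)"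
    by (rule Lim_transform_eventually)
  then show ?thesis
    unfolding continuous_within at_within_Ici_at_right \<Phi>_def .
qed

lemma step_convolution_measurable:
  fixes S :: "real \<Rightarrow> 'v::{banach, second_countable_topology} \<Rightarrow> 'v"
    and g :: "real \<Rightarrow> 'a \<Rightarrow> 'v"
  assumes S: "C0_semigroup S" and h: "h > 0"
    and g: "\<And>s. 0 \<le> s \<Longrightarrow> s < t \<Longrightarrow> g (floorh h s) \<in> borel_measurable M"
  shows "(\<lambda>\<omega>. LINT s:{0..t}|lborel. S (t - s) (g (floorh h s) \<omega>)) \<in> borel_measurable M"
proof -
  text \<open>g is only known to be measurable at grid points in [0, t); W cuts it off elsewhere, which
    does not change the integrand on [0, t) since floorh h maps [0, t) into [0, t).\<close>
  define W where "W x p = (if 0 \<le> x \<and> x < t then g x (fst p) else 0)" for x and p :: "'a \<times> real"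
  have W_measurable: "W (of_int k * h) \<in> borel_measurable (M \<Otimes>\<^sub>M lborel)" for k :: int
  proof (cases "0 \<le> of_int k * h \<and> of_int k * h < t")
    case True
    then have "g (of_int k * h) \<in> borel_measurable M"
      using g[of "of_int k * h"] by (simp add: floorh_of_int_mult[OF h])
    moreover have "W (of_int k * h) = (\<lambda>p. g (of_int k * h) (fst p))"
      unfolding W_def using True by simp
    ultimately show ?thesis
      using measurable_compose[OF measurable_fst] by metis
  next
    case False
    then show ?thesis
      unfolding W_def if_not_P[OF False] by simp
  qed
  have W_floorh_measurable: "(\<lambda>p. W (floorh h (snd p)) p) \<in> borel_measurable (M \<Otimes>\<^sub>M lborel)"
    by (rule measurable_compose_floorh[where \<phi>=snd and f=W, OF h _ W_measurable]) measurable
  have "(\<lambda>p. S (max 0 (t - snd p)) (W (floorh h (snd p)) p)) \<in> borel_measurable (M \<Otimes>\<^sub>M lborel)"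
    by (rule C0_semigroup_borel_measurable[OF S _ W_floorh_measurable]) measurable
  then have "(\<lambda>p. indicator {0..<t} (snd p) *\<^sub>R S (max 0 (t - snd p)) (W (floorh h (snd p)) p))
      \<in> borel_measurable (M \<Otimes>\<^sub>M lborel)"
    by (rule borel_measurable_scaleR[rotated]) measurable
  moreover have "indicator {0..<t} (snd p) *\<^sub>R S (max 0 (t - snd p)) (W (floorh h (snd p)) p)
      = indicator {0..<t} (snd p) *\<^sub>R S (t - snd p) (g (floorh h (snd p)) (fst p))" for p
  proof (cases "0 \<le> snd p \<and> snd p < t")
    case True
    then have "0 \<le> floorh h (snd p) \<and> floorh h (snd p) < t"
      using floorh_le[OF h, of "snd p"] floorh_nonneg[OF h, of "snd p"] by linarith
    then show ?thesis
      using True by (simp add: W_def)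
  qed simp
  ultimately have "(\<lambda>p. indicator {0..<t} (snd p) *\<^sub>R S (t - snd p) (g (floorh h (snd p)) (fst p)))
      \<in> borel_measurable (M \<Otimes>\<^sub>M lborel)"
    by simp
  then have "(\<lambda>\<omega>. \<integral>s. indicator {0..<t} s *\<^sub>R S (t - s) (g (floorh h s) \<omega>) \<partial>lborel) \<in> borel_measurable M"
    by (intro lborel.borel_measurable_lebesgue_integral) (simp add: case_prod_beta')
  then have "(\<lambda>\<omega>. LINT s:{0..<t}|lborel. S (t - s) (g (floorh h s) \<omega>)) \<in> borel_measurable M"
    unfolding set_lebesgue_integral_def .
  moreover have "(LINT s:{0..<t}|lborel. S (t - s) (g (floorh h s) \<omega>))
      = (LINT s:{0..t}|lborel. S (t - s) (g (floorh h s) \<omega>))" for \<omega>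
  proof (rule set_integral_cong_set)
    show "set_borel_measurable lborel {0..<t} (\<lambda>s. S (t - s) (g (floorh h s) \<omega>))"
      and "set_borel_measurable lborel {0..t} (\<lambda>s. S (t - s) (g (floorh h s) \<omega>))"
      unfolding set_borel_measurable_def
      by (rule step_convolution_integrand_measurable[OF S h]; auto)+
    show "AE s in lborel. s \<in> {0..t} \<longleftrightarrow> s \<in> {0..<t}"
      using AE_lborel_singleton[of t] by eventually_elim auto
  qed
  ultimately show ?thesis
    by simp
qed

lemma mild_solution_stoch_process:
  fixes S :: "real \<Rightarrow> 'v::{banach, second_countable_topology} \<Rightarrow> 'v"
    and Ou Y :: "real \<Rightarrow> 'a \<Rightarrow> 'v"
    and F :: "'v \<times> 'v \<Rightarrow> 'v"
  assumes S: "C0_semigroup S" and h: "h > 0"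
    and Ou: "stoch_process M T Ou" and F[measurable]: "F \<in> borel_measurable borel"
    and Y: "\<forall>t\<in>{0..T}. \<forall>\<omega>\<in>space M.
           Y t \<omega> = (LINT s:{0..t}|lborel. S (t - s) (F (Y (floorh h s) \<omega>, Ou (floorh h s) \<omega>)))
                    + Ou t \<omega>"
  shows "stoch_process M T Y"
proof -
  have step: "Y t \<in> borel_measurable M"
    if t: "t \<in> {0..T}" and past: "\<And>s. 0 \<le> s \<Longrightarrow> s < t \<Longrightarrow> Y (floorh h s) \<in> borel_measurable M"
    for t
  proof -
    have "(\<lambda>\<omega>. F (Y (floorh h s) \<omega>, Ou (floorh h s) \<omega>)) \<in> borel_measurable M"
      if "0 \<le> s" "s < t" for s
    proof -
      have "floorh h s \<in> {0..T}"
        using that t floorh_le[OF h, of s] floorh_nonneg[OF h, of s] by auto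
      then have [measurable]: "Ou (floorh h s) \<in> borel_measurable M"
        using Ou unfolding stoch_process_def by blast
      have [measurable]: "Y (floorh h s) \<in> borel_measurable M"
        using past that .
      show ?thesis
        by measurable
    qed
    then have "(\<lambda>\<omega>. (LINT s:{0..t}|lborel. S (t - s) (F (Y (floorh h s) \<omega>, Ou (floorh h s) \<omega>)))
        + Ou t \<omega>) \<in> borel_measurable M"
      using Ou t unfolding stoch_process_def
      by (intro borel_measurable_add step_convolution_measurable[OF S h]) auto
    then show ?thesis
      using Y t by (subst measurable_cong) auto
  qed
  have "Y t \<in> borel_measurable M" if "t \<in> {0..T}" "t \<le> real n * h" for n t
    using that
  proof (induction n arbitrary: t)
    case 0
    show ?case
    proof (rule step[OF 0(1)])
      fix s assume "0 \<le> s" "s < t"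
      with 0(2) show "Y (floorh h s) \<in> borel_measurable M"
        by simp
    qed
  next
    case (Suc n)
    show ?case
    proof (rule step[OF Suc.prems(1)])
      fix s assume s: "0 \<le> s" "s < t"
      then have "s < (real n + 1) * h"
        using Suc.prems(2) by (simp add: algebra_simps)
      then have "floorh h s \<le> real n * h"
        by (rule floorh_le_of_less[OF h])
      moreover have "floorh h s \<in> {0..T}"
        using s Suc.prems floorh_le[OF h, of s] floorh_nonneg[OF h, of s] by auto
      ultimately show "Y (floorh h s) \<in> borel_measurable M"
        by (rule Suc.IH[rotated])
    qed
  qed
  moreover have "\<exists>n::nat. t \<le> real n * h" for t
  proof -
    obtain n :: nat where "t / h \<le> real n"
      using real_arch_simple by blast
    then show ?thesis
      using h by (auto simp: divide_le_eq)
  qed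
  ultimately show ?thesis
    unfolding stoch_process_def by blast
qed

theorem lemma2p3:
  fixes M :: "'a measure"
    and S :: "real \<Rightarrow> 'v::{banach, second_countable_topology} \<Rightarrow> 'v"
    and Ou Y :: "real \<Rightarrow> 'a \<Rightarrow> 'v"
    and F :: "'v \<times> 'v \<Rightarrow> 'v"
    and T h :: real
  assumes "prob_space M"
    and "C0_semigroup S"
    and "stoch_process M T Ou"
    and "T > 0" and "h > 0"
    and "F \<in> borel_measurable borel"
    and "\<forall>t\<in>{0..T}. \<forall>\<omega>\<in>space M.
           Y t \<omega> = (LINT s:{0..t}|lborel. S (t - s) (F (Y (floorh h s) \<omega>, Ou (floorh h s) \<omega>)))
                    + Ou t \<omega>"
  shows "stoch_process M T Y \<and>
         stoch_process M T (\<lambda>t \<omega>. Y t \<omega> - Ou t \<omega>) \<and>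
         (\<forall>\<omega>\<in>space M. \<forall>t\<in>{0..T}. continuous (at t within {t..T}) (\<lambda>s. Y s \<omega> - Ou s \<omega>))"
proof (intro conjI ballI)
  note S = assms(2) and Ou = assms(3) and h = assms(5) and Y = assms(7)
  show Y_process: "stoch_process M T Y"
    using mild_solution_stoch_process[OF S h Ou assms(6) Y] .
  show "stoch_process M T (\<lambda>t \<omega>. Y t \<omega> - Ou t \<omega>)"
    using Y_process Ou unfolding stoch_process_def by (auto intro: borel_measurable_diff)
  fix \<omega> t assume \<omega>: "\<omega> \<in> space M" and t: "t \<in> {0..T}"
  have "continuous (at t within {t..T})
      (\<lambda>r. LINT s:{0..r}|lborel. S (r - s) (F (Y (floorh h s) \<omega>, Ou (floorh h s) \<omega>)))"
    using step_convolution_continuous_right[OF S h, of t "\<lambda>x. F (Y x \<omega>, Ou x \<omega>)"] t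
    by (auto intro: continuous_within_subset)
  then show "continuous (at t within {t..T}) (\<lambda>s. Y s \<omega> - Ou s \<omega>)"
    by (rule continuous_transform_within[OF _ zero_less_one]) (use t Y \<omega> in auto)
qed

end
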